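(* For integers $d\geqslant 0$ and real $x>0$ with $0\leqslant d\leqslant x$, $$\sum_{K_d-d<k\leqslant K_d}k^3=x\big(d^2\sqrt{dx}+O(d^{7/2}x^{-1/2})+O(d^2)\big),$$ where $k$ runs over integers, $K_d=K_d(x)$, and the implied constants are absolute.
   Context: For an integer $d\geqslant 0$ and real $x>0$, $K_d(x)=\big\lfloor \big(d+\sqrt{d^2+4dx}\,\big)/2\big\rfloor$, where $\lfloor\cdot\rfloor$ is the integer part. *)

theory Defs
  imports Complex_Main
begin

definition K :: "nat \<Rightarrow> real \<Rightarrow> int" where
  "K d x = \<lfloor>(real d + sqrt ((real d)\<^sup>2 + 4 * real d * x)) / 2\<rfloor>"

end

theory Submission
  imports Defs
begin

text \<open>Write \<open>u = \<surd>(dx)\<close> and \<open>m = \<surd>(d\<^sup>2/4 + dx)\<close>, so that \<open>K\<^sub>d(x) = \<lfloor>d/2 + m\<rfloor>\<close>.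
  A sum of cubes over \<open>d\<close> consecutive integers with midpoint \<open>a\<close> equals
  \<open>d a\<^sup>3 + a d (d\<^sup>2 - 1)/4\<close>, and for the window ending at \<open>K\<^sub>d(x)\<close> the midpoint
  lies within \<open>1/2\<close> of \<open>m\<close>. Since \<open>m - u = d\<^sup>2/(4(m + u)) \<le> d\<^sup>2/(8u)\<close> and \<open>m \<le> 3u/2\<close>
  when \<open>d \<le> x\<close>, replacing \<open>a\<^sup>3\<close> first by \<open>m\<^sup>3\<close> and then by \<open>u\<^sup>3\<close> costs \<open>O(d u\<^sup>2 + d\<^sup>3 u)\<close>,
  and so does the correction term; this is \<open>x\<close> times the claimed error.\<close>

lemma sum_cubes_greaterThanAtMost:
  "(\<Sum>k\<in>{c<..c + int n}. (real_of_int k) ^ 3) =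
     real n * (real_of_int c + (real n + 1) / 2) ^ 3
     + (real_of_int c + (real n + 1) / 2) * real n * ((real n)\<^sup>2 - 1) / 4"
proof (induction n)
  case 0
  then show ?case by simp
next
  case (Suc n)
  have "{c<..c + int (Suc n)} = insert (c + int n + 1) {c<..c + int n}" by auto
  then have "(\<Sum>k\<in>{c<..c + int (Suc n)}. (real_of_int k) ^ 3)
        = (real_of_int c + real n + 1) ^ 3 + (\<Sum>k\<in>{c<..c + int n}. (real_of_int k) ^ 3)"
    by simp
  then show ?case
    unfolding Suc.IH by (simp add: field_simps power3_eq_cube power2_eq_square)
qed

lemma K_midpoint_near_sqrt:
  "\<bar>real_of_int (K d x) - (real d - 1) / 2 - sqrt ((real d)\<^sup>2 / 4 + real d * x)\<bar> \<le> 1 / 2"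
proof -
  define m where "m = sqrt ((real d)\<^sup>2 / 4 + real d * x)"
  have "sqrt ((real d)\<^sup>2 + 4 * real d * x) = sqrt 4 * m"
    unfolding m_def real_sqrt_mult [symmetric] by (simp add: algebra_simps)
  then have "K d x = \<lfloor>real d / 2 + m\<rfloor>"
    unfolding K_def by (simp add: add_divide_distrib)
  then have "real_of_int (K d x) \<le> real d / 2 + m" "real d / 2 + m < real_of_int (K d x) + 1"
    by linarith+
  then show ?thesis
    unfolding m_def [symmetric] by (simp add: abs_le_iff field_simps)
qed

lemma abs_cube_diff_le:
  fixes a b M :: real
  assumes "\<bar>a\<bar> \<le> M" "\<bar>b\<bar> \<le> M"
  shows "\<bar>a ^ 3 - b ^ 3\<bar> \<le> 3 * M\<^sup>2 * \<bar>a - b\<bar>"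
proof -
  have "\<bar>a\<^sup>2 + a * b + b\<^sup>2\<bar> \<le> \<bar>a\<bar> * \<bar>a\<bar> + \<bar>a\<bar> * \<bar>b\<bar> + \<bar>b\<bar> * \<bar>b\<bar>"
    unfolding power2_eq_square abs_mult [symmetric]
    by (rule order_trans [OF abs_triangle_ineq add_right_mono [OF abs_triangle_ineq]])
  also have "\<dots> \<le> M * M + M * M + M * M"
    using assms by (intro add_mono mult_mono) auto
  finally have "\<bar>a\<^sup>2 + a * b + b\<^sup>2\<bar> \<le> 3 * M\<^sup>2"
    by (simp add: power2_eq_square)
  moreover have "a ^ 3 - b ^ 3 = (a - b) * (a\<^sup>2 + a * b + b\<^sup>2)"
    by (simp add: algebra_simps power2_eq_square power3_eq_cube)
  ultimately show ?thesis
    by (simp add: abs_mult mult.commute mult_left_mono)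
qed

lemma sqrt_shifted_product_bounds:
  fixes D x :: real
  assumes "0 < D" "D \<le> x"
  defines "u \<equiv> sqrt (D * x)" and "m \<equiv> sqrt (D\<^sup>2 / 4 + D * x)"
  shows "u \<le> m" "m \<le> 3 / 2 * u" "m ^ 3 - u ^ 3 \<le> D\<^sup>2 * u"
proof -
  have u2: "u\<^sup>2 = D * x" and m2: "m\<^sup>2 = D\<^sup>2 / 4 + D * x" and "0 < u"
    using assms by (simp_all add: u_def m_def)
  have "D\<^sup>2 \<le> D * x" "0 \<le> D * x"
    using assms by (simp_all add: power2_eq_square)
  show um: "u \<le> m"
    unfolding u_def m_def by simp
  have "m \<le> sqrt (9 / 4 * (D * x))"
    unfolding m_def using \<open>D\<^sup>2 \<le> D * x\<close> \<open>0 \<le> D * x\<close> by (intro real_sqrt_le_mono) linarith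
  also have "\<dots> = 3 / 2 * u"
    unfolding u_def real_sqrt_mult by (simp add: real_sqrt_divide)
  finally show m_le: "m \<le> 3 / 2 * u" .
  have "(m - u) * (m + u) = D\<^sup>2 / 4"
    using m2 u2 by (simp add: algebra_simps power2_eq_square)
  moreover have "(m - u) * (2 * u) \<le> (m - u) * (m + u)"
    using um by (intro mult_left_mono) auto
  ultimately have diff: "m - u \<le> D\<^sup>2 / (8 * u)"
    using \<open>0 < u\<close> by (simp add: field_simps)
  have "m ^ 3 - u ^ 3 \<le> 3 * m\<^sup>2 * (m - u)"
    using abs_cube_diff_le [of m m u] um \<open>0 < u\<close> by simp
  also have "\<dots> \<le> 3 * (3 / 2 * u)\<^sup>2 * (D\<^sup>2 / (8 * u))"
    using m_le um diff \<open>0 < u\<close> by (intro mult_mono power_mono) auto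
  also have "\<dots> \<le> D\<^sup>2 * u"
    using \<open>0 < u\<close> \<open>0 < D\<close> by (simp add: field_simps power2_eq_square)
  finally show "m ^ 3 - u ^ 3 \<le> D\<^sup>2 * u" .
qed

lemma sum_cubes_K_window_estimate:
  assumes "1 \<le> d" "real d \<le> x"
  shows "\<bar>(\<Sum>k\<in>{K d x - int d<..K d x}. (real_of_int k) ^ 3)
            - x * ((real d)\<^sup>2 * sqrt (real d * x))\<bar>
         \<le> 2 * (real d) ^ 3 * sqrt (real d * x) + 6 * (real d)\<^sup>2 * x"
proof -
  define D where "D = real d"
  define u where "u = sqrt (D * x)"
  define m where "m = sqrt (D\<^sup>2 / 4 + D * x)"
  define a where "a = real_of_int (K d x) - (D - 1) / 2"
  have "1 \<le> D" "D \<le> x"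
    using assms by (simp_all add: D_def)
  then have "1 \<le> D * x"
    using mult_mono [of 1 D 1 x] by simp
  then have "1 \<le> u" "u\<^sup>2 = D * x"
    by (simp_all add: u_def)
  have "u \<le> m" "m \<le> 3 / 2 * u" "m ^ 3 - u ^ 3 \<le> D\<^sup>2 * u"
    using sqrt_shifted_product_bounds [of D x] \<open>1 \<le> D\<close> \<open>D \<le> x\<close>
    by (simp_all add: u_def m_def)
  have "\<bar>a - m\<bar> \<le> 1 / 2"
    using K_midpoint_near_sqrt [of d x] by (simp add: a_def m_def D_def)
  then have "\<bar>a\<bar> \<le> 2 * u" "\<bar>m\<bar> \<le> 2 * u"
    using \<open>u \<le> m\<close> \<open>m \<le> 3 / 2 * u\<close> \<open>1 \<le> u\<close> by linarith+
  have "\<bar>a ^ 3 - m ^ 3\<bar> \<le> 3 * (2 * u)\<^sup>2 * \<bar>a - m\<bar>"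
    using \<open>\<bar>a\<bar> \<le> 2 * u\<close> \<open>\<bar>m\<bar> \<le> 2 * u\<close> by (rule abs_cube_diff_le)
  also have "\<dots> \<le> 3 * (2 * u)\<^sup>2 * (1 / 2)"
    using \<open>\<bar>a - m\<bar> \<le> 1 / 2\<close> by (intro mult_left_mono) auto
  finally have cube_err: "\<bar>a ^ 3 - m ^ 3\<bar> \<le> 6 * u\<^sup>2"
    by (simp add: power_mult_distrib)
  have "\<bar>a * D * (D\<^sup>2 - 1) / 4\<bar> = \<bar>a\<bar> * (D * (D\<^sup>2 - 1)) / 4"
    using \<open>1 \<le> D\<close> by (simp add: abs_mult)
  also have "\<dots> \<le> (2 * u) * (D * D\<^sup>2) / 4"
    using \<open>\<bar>a\<bar> \<le> 2 * u\<close> \<open>1 \<le> D\<close> by (intro divide_right_mono mult_mono) auto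
  finally have correction: "\<bar>a * D * (D\<^sup>2 - 1) / 4\<bar> \<le> D ^ 3 * u / 2"
    by (simp add: power2_eq_square power3_eq_cube)
  have "real_of_int (K d x - int d) + (real d + 1) / 2 = a"
    by (simp add: a_def D_def field_simps)
  then have sum: "(\<Sum>k\<in>{K d x - int d<..K d x}. (real_of_int k) ^ 3)
                  = D * a ^ 3 + a * D * (D\<^sup>2 - 1) / 4"
    using sum_cubes_greaterThanAtMost [of "K d x - int d" d] by (simp add: D_def)
  have main: "x * ((real d)\<^sup>2 * sqrt (real d * x)) = D * u ^ 3"
    using \<open>u\<^sup>2 = D * x\<close> by (simp add: D_def u_def power2_eq_square power3_eq_cube)
  have "0 \<le> m ^ 3 - u ^ 3"
    using \<open>u \<le> m\<close> \<open>1 \<le> u\<close> by (simp add: power_mono)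
  have "D * a ^ 3 + a * D * (D\<^sup>2 - 1) / 4 - D * u ^ 3
        = D * (a ^ 3 - m ^ 3) + D * (m ^ 3 - u ^ 3) + a * D * (D\<^sup>2 - 1) / 4"
    by (simp add: algebra_simps)
  then have "\<bar>D * a ^ 3 + a * D * (D\<^sup>2 - 1) / 4 - D * u ^ 3\<bar>
        \<le> \<bar>D * (a ^ 3 - m ^ 3)\<bar> + \<bar>D * (m ^ 3 - u ^ 3)\<bar> + \<bar>a * D * (D\<^sup>2 - 1) / 4\<bar>"
    by (simp only: order_trans [OF abs_triangle_ineq add_right_mono [OF abs_triangle_ineq]])
  also have "\<dots> = D * \<bar>a ^ 3 - m ^ 3\<bar> + D * (m ^ 3 - u ^ 3) + \<bar>a * D * (D\<^sup>2 - 1) / 4\<bar>"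
    using \<open>1 \<le> D\<close> \<open>0 \<le> m ^ 3 - u ^ 3\<close> by (simp add: abs_mult)
  also have "\<dots> \<le> D * (6 * u\<^sup>2) + D * (D\<^sup>2 * u) + D ^ 3 * u / 2"
    using cube_err correction \<open>m ^ 3 - u ^ 3 \<le> D\<^sup>2 * u\<close> \<open>1 \<le> D\<close>
    by (intro add_mono mult_left_mono) auto
  also have "\<dots> \<le> 2 * D ^ 3 * u + 6 * D\<^sup>2 * x"
    using \<open>1 \<le> u\<close> \<open>1 \<le> D\<close> \<open>u\<^sup>2 = D * x\<close> by (simp add: power2_eq_square power3_eq_cube)
  finally show ?thesis
    unfolding sum main by (simp add: D_def u_def)
qed

lemma powr_error_term_eq:
  fixes D x :: real
  assumes "0 \<le> D" "0 < x"
  shows "x * (C1 * D powr (7/2) * x powr (-1/2) + C2 * D\<^sup>2)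
         = C1 * D ^ 3 * sqrt (D * x) + C2 * D\<^sup>2 * x"
proof -
  have "D powr (7/2) = D ^ 3 * sqrt D"
  proof (cases "D = 0")
    case False
    have "D powr (7/2) = D powr (3 + 1/2)"
      by simp
    also have "\<dots> = D powr 3 * D powr (1/2)"
      by (simp only: powr_add)
    finally show ?thesis
      using False assms by (simp add: powr_half_sqrt powr_realpow)
  qed simp
  moreover have "x * x powr (-1/2) = sqrt x"
  proof -
    have "x * x powr (-1/2) = x powr 1 * x powr (-1/2)"
      using assms by simp
    also have "\<dots> = x powr (1 + -1/2)"
      by (simp only: powr_add)
    finally show ?thesis
      using assms by (simp add: powr_half_sqrt)
  qed
  ultimately show ?thesis
    by (simp add: algebra_simps real_sqrt_mult flip: \<open>x * x powr (-1/2) = sqrt x\<close>)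
qed

theorem proposition3:
  shows "\<exists>C1 C2. \<forall>(d::nat) (x::real). 0 < x \<longrightarrow> real d \<le> x \<longrightarrow>
     \<bar>(\<Sum>k\<in>{K d x - int d<..K d x}. (real_of_int k) ^ 3)
        - x * ((real d)\<^sup>2 * sqrt (real d * x))\<bar>
     \<le> x * (C1 * real d powr (7/2) * x powr (-1/2) + C2 * (real d)\<^sup>2)"
proof (intro exI allI impI)
  fix d :: nat and x :: real
  assume "0 < x" "real d \<le> x"
  show "\<bar>(\<Sum>k\<in>{K d x - int d<..K d x}. (real_of_int k) ^ 3)
          - x * ((real d)\<^sup>2 * sqrt (real d * x))\<bar>
        \<le> x * (2 * real d powr (7/2) * x powr (-1/2) + 6 * (real d)\<^sup>2)"
  proof (cases "d = 0")
    case False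
    then show ?thesis
      using sum_cubes_K_window_estimate [of d x] powr_error_term_eq [of "real d" x 2 6]
        \<open>0 < x\<close> \<open>real d \<le> x\<close> by simp
  qed simp
qed

end
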